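(* For every odd integer $n\ge 3$ and every positive divisor $\lambda$ of $2n$, there exists a ${}^\lambda\mathrm{H}_{2n/\lambda}(n;3)$.
   Context: For positive integers $m,n,s,k,\lambda,t$ with $t$ dividing $\frac{2nk}{\lambda}$, let $v=\frac{2nk}{\lambda}+t$ and $J$ the subgroup of $\mathbb{Z}_v$ of order $t$. A ${}^\lambda\mathrm{H}_t(m,n;s,k)$ is an $m\times n$ partially filled array with entries in $\mathbb{Z}_v$ such that: (a) each row has exactly $s$ and each column exactly $k$ filled cells; (b) the multiset $\{\pm x: x$ an entry of a filled cell$\}$ contains each element of $\mathbb{Z}_v\setminus J$ exactly $\lambda$ times and no element of $J$; (c) every row and every column sums to $0$ in $\mathbb{Z}_v$. When $m=n$ (so $s=k$) it is denoted ${}^\lambda\mathrm{H}_t(n;k)$. *)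

theory Defs
  imports "HOL-Library.Multiset"
begin

text \<open>A partially filled m x n array with entries in Z_v: entry (i,j) with i<m, j<n is
  either None (empty) or Some x with x a residue in {0..<v} representing an element of Z_v.\<close>

definition filled_cells :: "nat \<Rightarrow> nat \<Rightarrow> (nat \<Rightarrow> nat \<Rightarrow> nat option) \<Rightarrow> (nat \<times> nat) set" where
  "filled_cells m n A = {(i,j). i < m \<and> j < n \<and> A i j \<noteq> None}"

definition subgroup_J :: "nat \<Rightarrow> nat \<Rightarrow> nat set" where
  "subgroup_J v t = {g. g < v \<and> (v div t) dvd g}"

definition relative_heffter ::
  "nat \<Rightarrow> nat \<Rightarrow> nat \<Rightarrow> nat \<Rightarrow> nat \<Rightarrow> nat \<Rightarrow> (nat \<Rightarrow> nat \<Rightarrow> nat option) \<Rightarrow> bool" where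
  "relative_heffter lam t m n s k A \<longleftrightarrow>
     (let v = 2 * n * k div lam + t;
          F = filled_cells m n A;
          val = (\<lambda>(i,j). the (A i j));
          M = (\<Sum>c\<in>F. {# val c, (v - val c) mod v #})
      in 0 < m \<and> 0 < n \<and> 0 < s \<and> 0 < k \<and> 0 < lam \<and> 0 < t \<and>
         lam dvd 2 * n * k \<and> t dvd (2 * n * k div lam) \<and>
         (\<forall>c\<in>F. val c < v) \<and>
         (\<forall>i<m. card {j. j < n \<and> (i,j) \<in> F} = s) \<and>
         (\<forall>j<n. card {i. i < m \<and> (i,j) \<in> F} = k) \<and>
         (\<forall>g<v. count M g = (if g \<in> subgroup_J v t then 0 else lam)) \<and>
         (\<forall>i<m. (\<Sum>j\<in>{j. j < n \<and> (i,j) \<in> F}. val (i,j)) mod v = 0) \<and>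
         (\<forall>j<n. (\<Sum>i\<in>{i. i < m \<and> (i,j) \<in> F}. val (i,j)) mod v = 0))"

end

theory Submission
  imports Defs "HOL-Number_Theory.Cong"
begin

(* The array is circulant: row i holds 1 + 8i, -6 - 16i and 5 + 8i, reduced modulo
   v = 8n/lambda, in the columns i, i + 1, i + 2 (mod n).  These three entries sum to 0, and
   along a column the row index drops by one per diagonal, so the column sums vanish up to
   multiples of 8n, which v divides.  On a fixed diagonal the entries and their negatives
   run through arithmetic progressions with difference 8 or 16 modulo v; since v/8 (lambda
   odd) resp. v/4 (lambda even) is odd, a progression of length n hits every residue of its
   class modulo 8 resp. 4 equally often.  The classes obtained are exactly the residues not
   divisible by 4, each hit lambda times, and the multiples of 4 form J. *)

(* (j + n - i) mod n indexes the cyclic diagonal through the cell (i, j);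
   f k i is the entry of row i on diagonal k. *)
definition cyclic_array :: "nat \<Rightarrow> nat \<Rightarrow> (nat \<Rightarrow> nat \<Rightarrow> nat) \<Rightarrow> nat \<Rightarrow> nat \<Rightarrow> nat option" where
  "cyclic_array n s f i j =
     (if i < n \<and> j < n \<and> (j + n - i) mod n < s then Some (f ((j + n - i) mod n) i) else None)"

lemma cyclic_offset_eq_iff_row:
  fixes n i j k :: nat
  assumes "i < n" "j < n" "k < n"
  shows "(j + n - i) mod n = k \<longleftrightarrow> j = (i + k) mod n"
  using assms by (auto simp: mod_if split: if_splits)

lemma cyclic_offset_eq_iff_col:
  fixes n i j k :: nat
  assumes "i < n" "j < n" "k < n"
  shows "(j + n - i) mod n = k \<longleftrightarrow> i = (j + n - k) mod n"
  using assms by (auto simp: mod_if split: if_splits)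

lemma cyclic_array_row_entry:
  assumes "i < n" "k < s" "s \<le> n"
  shows "cyclic_array n s f i ((i + k) mod n) = Some (f k i)"
  using assms cyclic_offset_eq_iff_row[of i n "(i + k) mod n" k]
  by (simp add: cyclic_array_def)

lemma cyclic_array_col_entry:
  assumes "j < n" "k < s" "s \<le> n"
  shows "cyclic_array n s f ((j + n - k) mod n) j = Some (f k ((j + n - k) mod n))"
  using assms cyclic_offset_eq_iff_col[of "(j + n - k) mod n" n j k]
  by (simp add: cyclic_array_def)

lemma filled_cells_cyclic_array:
  assumes "s \<le> n"
  shows "filled_cells n n (cyclic_array n s f) = (\<lambda>(i, k). (i, (i + k) mod n)) ` ({..<n} \<times> {..<s})"
proof (intro set_eqI iffI)
  fix c assume "c \<in> filled_cells n n (cyclic_array n s f)"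
  then obtain i j where c: "c = (i, j)" "i < n" "j < n" "(j + n - i) mod n < s"
    by (auto simp: filled_cells_def cyclic_array_def split: if_splits)
  then have "j = (i + (j + n - i) mod n) mod n"
    using cyclic_offset_eq_iff_row[of i n j "(j + n - i) mod n"] by simp
  with c show "c \<in> (\<lambda>(i, k). (i, (i + k) mod n)) ` ({..<n} \<times> {..<s})" by force
next
  fix c assume "c \<in> (\<lambda>(i, k). (i, (i + k) mod n)) ` ({..<n} \<times> {..<s})"
  then obtain i k where "c = (i, (i + k) mod n)" "i < n" "k < s" by auto
  with assms show "c \<in> filled_cells n n (cyclic_array n s f)"
    by (simp add: filled_cells_def cyclic_array_row_entry)
qed

lemma cyclic_array_row_cells:
  assumes "i < n" "s \<le> n"
  shows "{j. j < n \<and> (i, j) \<in> filled_cells n n (cyclic_array n s f)} = (\<lambda>k. (i + k) mod n) ` {..<s}"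
  using assms by (auto simp: filled_cells_cyclic_array)

lemma cyclic_array_col_cells:
  assumes "j < n" "s \<le> n"
  shows "{i. i < n \<and> (i, j) \<in> filled_cells n n (cyclic_array n s f)} = (\<lambda>k. (j + n - k) mod n) ` {..<s}"
proof (intro set_eqI iffI)
  fix i assume "i \<in> {i. i < n \<and> (i, j) \<in> filled_cells n n (cyclic_array n s f)}"
  then have i: "i < n" "(j + n - i) mod n < s"
    by (auto simp: filled_cells_def cyclic_array_def split: if_splits)
  then have "i = (j + n - (j + n - i) mod n) mod n"
    using assms cyclic_offset_eq_iff_col[of i n j "(j + n - i) mod n"] by simp
  with i show "i \<in> (\<lambda>k. (j + n - k) mod n) ` {..<s}" by blast
next
  fix i assume "i \<in> (\<lambda>k. (j + n - k) mod n) ` {..<s}"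
  then obtain k where "i = (j + n - k) mod n" "k < s" by blast
  with assms show "i \<in> {i. i < n \<and> (i, j) \<in> filled_cells n n (cyclic_array n s f)}"
    by (simp add: filled_cells_def cyclic_array_col_entry)
qed

lemma inj_on_cyclic_row:
  fixes i n s :: nat
  assumes "i < n" "s \<le> n"
  shows "inj_on (\<lambda>k. (i + k) mod n) {..<s}"
proof (rule inj_on_inverseI)
  show "((i + k) mod n + n - i) mod n = k" if "k \<in> {..<s}" for k
    using that assms cyclic_offset_eq_iff_row[of i n "(i + k) mod n" k] by simp
qed

lemma inj_on_cyclic_col:
  fixes j n s :: nat
  assumes "j < n" "s \<le> n"
  shows "inj_on (\<lambda>k. (j + n - k) mod n) {..<s}"
proof (rule inj_on_inverseI)
  show "(j + n - (j + n - k) mod n) mod n = k" if "k \<in> {..<s}" for k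
    using that assms cyclic_offset_eq_iff_col[of "(j + n - k) mod n" n j k] by simp
qed

lemma inj_on_cyclic_positions:
  fixes n s :: nat
  assumes "s \<le> n"
  shows "inj_on (\<lambda>(i, k). (i, (i + k) mod n)) ({..<n} \<times> {..<s})"
  using inj_on_cyclic_row[OF _ assms] by (auto simp: inj_on_def)

lemma sum_filled_cells_cyclic_array:
  assumes "s \<le> n"
  shows "(\<Sum>c\<in>filled_cells n n (cyclic_array n s f). h (case c of (i, j) \<Rightarrow> the (cyclic_array n s f i j)))
           = (\<Sum>i<n. \<Sum>k<s. h (f k i))"
proof -
  have "(\<Sum>c\<in>filled_cells n n (cyclic_array n s f). h (case c of (i, j) \<Rightarrow> the (cyclic_array n s f i j)))
          = (\<Sum>(i, k)\<in>{..<n} \<times> {..<s}. h (f k i))"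
    unfolding filled_cells_cyclic_array[OF assms]
    using assms by (auto simp: sum.reindex inj_on_cyclic_positions cyclic_array_row_entry intro!: sum.cong)
  then show ?thesis by (simp add: sum.cartesian_product)
qed

lemma card_row_cyclic_array:
  assumes "i < n" "s \<le> n"
  shows "card {j. j < n \<and> (i, j) \<in> filled_cells n n (cyclic_array n s f)} = s"
  using assms by (simp add: cyclic_array_row_cells card_image inj_on_cyclic_row)

lemma card_col_cyclic_array:
  assumes "j < n" "s \<le> n"
  shows "card {i. i < n \<and> (i, j) \<in> filled_cells n n (cyclic_array n s f)} = s"
  using assms by (simp add: cyclic_array_col_cells card_image inj_on_cyclic_col)

lemma sum_row_cyclic_array:
  assumes "i < n" "s \<le> n"
  shows "(\<Sum>j\<in>{j. j < n \<and> (i, j) \<in> filled_cells n n (cyclic_array n s f)}. the (cyclic_array n s f i j))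
           = (\<Sum>k<s. f k i)"
  using assms by (simp add: cyclic_array_row_cells sum.reindex inj_on_cyclic_row cyclic_array_row_entry)

lemma sum_col_cyclic_array:
  assumes "j < n" "s \<le> n"
  shows "(\<Sum>i\<in>{i. i < n \<and> (i, j) \<in> filled_cells n n (cyclic_array n s f)}. the (cyclic_array n s f i j))
           = (\<Sum>k<s. f k ((j + n - k) mod n))"
  using assms by (simp add: cyclic_array_col_cells sum.reindex inj_on_cyclic_col cyclic_array_col_entry)

lemma cong_cyclic_col_index:
  fixes j k n :: nat
  assumes "k \<le> n"
  shows "[int ((j + n - k) mod n) = int j - int k] (mod int n)"
proof -
  have "int ((j + n - k) mod n) = (int j - int k + int n) mod int n"
    using assms by (simp add: of_nat_mod of_nat_diff algebra_simps)
  then show ?thesis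
    by (simp add: cong_def)
qed

lemma relative_heffter_cyclic_arrayI:
  fixes lam t n s v :: nat and f :: "nat \<Rightarrow> nat \<Rightarrow> nat"
  assumes "0 < lam" "0 < t" "0 < s" "s \<le> n" "lam dvd 2 * n * s" "t dvd 2 * n * s div lam"
    and "v = 2 * n * s div lam + t"
    and "\<And>k i. f k i < v"
    and "\<And>i. i < n \<Longrightarrow> (\<Sum>k<s. f k i) mod v = 0"
    and "\<And>j. j < n \<Longrightarrow> (\<Sum>k<s. f k ((j + n - k) mod n)) mod v = 0"
    and "\<And>g. g < v \<Longrightarrow> count (\<Sum>i<n. \<Sum>k<s. {#f k i, (v - f k i) mod v#}) g
                          = (if g \<in> subgroup_J v t then 0 else lam)"
  shows "relative_heffter lam t n n s s (cyclic_array n s f)"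
proof -
  let ?A = "cyclic_array n s f"
  have entries: "(case c of (i, j) \<Rightarrow> the (?A i j)) < v" if "c \<in> filled_cells n n ?A" for c
    using that assms(4,8) by (auto simp: filled_cells_cyclic_array cyclic_array_row_entry)
  have "(\<Sum>c\<in>filled_cells n n ?A. {#case c of (i, j) \<Rightarrow> the (?A i j),
                                    (v - (case c of (i, j) \<Rightarrow> the (?A i j))) mod v#})
          = (\<Sum>i<n. \<Sum>k<s. {#f k i, (v - f k i) mod v#})"
    using sum_filled_cells_cyclic_array[OF assms(4), where h = "\<lambda>x. {#x, (v - x) mod v#}"] by simp
  with entries show ?thesis
    unfolding relative_heffter_def Let_def assms(7)[symmetric]
    using assms by (simp add: card_row_cyclic_array card_col_cyclic_array
                              sum_row_cyclic_array sum_col_cyclic_array)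
qed

lemma card_residue_class:
  fixes d e r :: nat
  assumes "r < e"
  shows "card {i. i < d * e \<and> i mod e = r} = d"
proof -
  have "{i. i < d * e \<and> i mod e = r} = (\<lambda>q. q * e + r) ` {..<d}"
  proof (intro set_eqI iffI)
    fix i assume i: "i \<in> {i. i < d * e \<and> i mod e = r}"
    then have "i div e < d" by (simp add: less_mult_imp_div_less)
    moreover have "i = i div e * e + r" using i div_mult_mod_eq[of i e] by simp
    ultimately show "i \<in> (\<lambda>q. q * e + r) ` {..<d}" by blast
  next
    fix i assume "i \<in> (\<lambda>q. q * e + r) ` {..<d}"
    then obtain q where "q < d" "i = q * e + r" by blast
    moreover have "q * e + r < d * e"
    proof -
      have "(q + 1) * e \<le> d * e" using \<open>q < d\<close> by (intro mult_right_mono) simp_all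
      then show ?thesis using assms by simp
    qed
    ultimately show "i \<in> {i. i < d * e \<and> i mod e = r}" using assms by simp
  qed
  moreover have "inj_on (\<lambda>q. q * e + r) {..<d}"
    using assms by (intro inj_onI) simp
  ultimately show ?thesis by (simp add: card_image)
qed

lemma cong_progression_iff:
  fixes K e :: nat and a c c' t x :: int
  assumes "coprime c (int e)" "0 < K" "[c * c' = 1] (mod int e)"
  shows "[a + int K * c * x = a + int K * t] (mod int K * int e) \<longleftrightarrow> [x = c' * t] (mod int e)"
proof -
  have "[a + int K * c * x = a + int K * t] (mod int K * int e)
          \<longleftrightarrow> [int K * (c * x) = int K * t] (mod int K * int e)"
    by (simp add: cong_add_lcancel mult.assoc)
  also have "\<dots> \<longleftrightarrow> [c * x = t] (mod int e)"
    using assms(2) by (simp add: cong_def mod_mult_mult1)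
  also have "\<dots> \<longleftrightarrow> [c * x = c * (c' * t)] (mod int e)"
  proof -
    have "[c * (c' * t) = t] (mod int e)"
      using cong_scalar_right[OF assms(3), of t] by (simp add: ac_simps)
    then show ?thesis by (meson cong_sym cong_trans)
  qed
  also have "\<dots> \<longleftrightarrow> [x = c' * t] (mod int e)"
    using assms(1) by (rule cong_mult_lcancel)
  finally show ?thesis .
qed

lemma card_progression_mod:
  fixes K e d :: nat and a c g :: int
  assumes "coprime c (int e)" "0 < K" "0 \<le> g" "g < int K * int e"
  shows "card {i. i < d * e \<and> (a + int K * c * int i) mod (int K * int e) = g}
           = (if [g = a] (mod int K) then d else 0)"
proof (cases "[g = a] (mod int K)")
  case False
  have "(a + int K * c * int i) mod (int K * int e) \<noteq> g" for i
  proof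
    assume "(a + int K * c * int i) mod (int K * int e) = g"
    then have "[a + int K * c * int i = g] (mod int K * int e)"
      using assms(3,4) by (simp add: cong_def)
    then have "[a + int K * c * int i = g] (mod int K)"
      by (rule cong_modulus_mult)
    moreover have "[a + int K * c * int i = a] (mod int K)"
      by (simp add: cong_def mult.assoc)
    ultimately show False
      using False by (meson cong_sym cong_trans)
  qed
  with False show ?thesis by simp
next
  case True
  then obtain t where t: "g = a + int K * t"
    by (metis cong_iff_dvd_diff cong_sym dvdE diff_add_cancel add.commute)
  obtain c' where c': "[c * c' = 1] (mod int e)"
    using cong_solve_coprime_int[OF assms(1)] by blast
  have e: "0 < e"
    using assms(3,4) by (rule_tac ccontr) simp
  define r where "r = nat ((c' * t) mod int e)"
  have r: "int r = (c' * t) mod int e" "r < e"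
    using e by (simp_all add: r_def nat_less_iff)
  have "(a + int K * c * int i) mod (int K * int e) = g \<longleftrightarrow> i mod e = r" for i
  proof -
    have "(a + int K * c * int i) mod (int K * int e) = g
          \<longleftrightarrow> [a + int K * c * int i = a + int K * t] (mod int K * int e)"
      using assms(3,4) t by (simp add: cong_def)
    also have "\<dots> \<longleftrightarrow> [int i = c' * t] (mod int e)"
      using assms(1,2) c' by (rule cong_progression_iff)
    also have "\<dots> \<longleftrightarrow> int (i mod e) = int r"
      by (simp add: cong_def r(1) of_nat_mod)
    finally show ?thesis by simp
  qed
  then show ?thesis
    using True card_residue_class[OF r(2), of d] by simp
qed

lemma card_signed_progression_mod:
  fixes K e d n v g :: nat and a c :: int and f :: "int \<Rightarrow> int"
  assumes "coprime c (int e)" "0 < K" "g < v" "v = K * e" "n = d * e"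
    and "\<And>x. f x = a + int K * c * x"
  shows "card {i. i < n \<and> f (int i) mod int v = int g} + card {i. i < n \<and> (- f (int i)) mod int v = int g}
           = (if [int g = a] (mod int K) then d else 0) + (if [int g = - a] (mod int K) then d else 0)"
proof -
  have f: "f = (\<lambda>x. a + int K * c * x)" using assms(6) by auto
  have g: "int g < int K * int e" using assms(3,4) by (simp flip: of_nat_mult)
  have "coprime (- c) (int e)" using assms(1) by simp
  with assms(1,2) g show ?thesis
    unfolding f assms(4,5)
    using card_progression_mod[of c e K "int g" d a] card_progression_mod[of "- c" e K "int g" d "- a"]
    by (simp add: algebra_simps)
qed

lemma nat_mod_minus:
  fixes v :: nat and z :: int
  assumes "0 < v"
  shows "(v - nat (z mod int v)) mod v = nat ((- z) mod int v)"
proof -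
  have "int ((v - nat (z mod int v)) mod v) = (int v - z mod int v) mod int v"
    using assms by (simp add: of_nat_mod of_nat_diff nat_le_iff order.strict_implies_order)
  also have "\<dots> = (- z) mod int v"
    by (simp add: mod_diff_right_eq[symmetric] mod_minus_eq)
  finally show ?thesis by (metis nat_int)
qed

lemma sum_nat_mod_eq_0:
  fixes v :: nat and z :: "'a \<Rightarrow> int"
  assumes "0 < v" "[(\<Sum>k\<in>K. z k) = 0] (mod int v)"
  shows "(\<Sum>k\<in>K. nat (z k mod int v)) mod v = 0"
proof -
  have "int (\<Sum>k\<in>K. nat (z k mod int v)) = (\<Sum>k\<in>K. z k mod int v)"
    using assms(1) by simp
  also have "[\<dots> = (\<Sum>k\<in>K. z k)] (mod int v)"
    by (rule cong_sum) simp
  also note assms(2)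
  finally have "int v dvd int (\<Sum>k\<in>K. nat (z k mod int v))"
    by (simp only: cong_0_iff)
  then show ?thesis by (simp only: of_nat_dvd_iff dvd_imp_mod_0)
qed

lemma count_sum_pairs:
  fixes n :: nat
  shows "count (\<Sum>i<n. \<Sum>k\<in>K. {#x k i, y k i#}) g
           = (\<Sum>k\<in>K. card {i. i < n \<and> x k i = g} + card {i. i < n \<and> y k i = g})"
proof -
  have pair: "count {#a, b#} g = of_bool (a = g) + of_bool (b = g)" for a b
    by simp
  have card: "(\<Sum>i<n. of_bool (P i) :: nat) = card {i. i < n \<and> P i}" for P
    by (simp add: sum_of_bool_eq Int_def)
  have "count (\<Sum>i<n. \<Sum>k\<in>K. {#x k i, y k i#}) g
          = (\<Sum>k\<in>K. \<Sum>i<n. of_bool (x k i = g) + of_bool (y k i = g))"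
    by (simp only: count_sum pair sum.swap[of _ "{..<n}"])
  also have "\<dots> = (\<Sum>k\<in>K. card {i. i < n \<and> x k i = g} + card {i. i < n \<and> y k i = g})"
    by (simp only: sum.distrib card)
  finally show ?thesis .
qed

definition heffter_entry :: "nat \<Rightarrow> int \<Rightarrow> int" where
  "heffter_entry k x = (if k = 0 then 1 + 8 * x else if k = 1 then - 6 - 16 * x else 5 + 8 * x)"

lemma sum_lessThan_3: "(\<Sum>k<3. f (k::nat)) = f 0 + f 1 + (f 2 :: 'a::comm_monoid_add)"
  by (simp add: numeral_3_eq_3 numeral_2_eq_2 add_ac)

lemma heffter_entry_row_sum: "(\<Sum>k<3. heffter_entry k x) = 0"
  by (simp add: sum_lessThan_3 heffter_entry_def)

lemma heffter_entry_col_sum: "(\<Sum>k<3. heffter_entry k (x - int k)) = 0"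
  by (simp add: sum_lessThan_3 heffter_entry_def)

lemma heffter_entry_cong:
  assumes "v dvd 8 * n" "[x = y] (mod n)"
  shows "[heffter_entry k x = heffter_entry k y] (mod v)"
proof -
  have "[8 * x = 8 * y] (mod v)"
    using cong_dvd_modulus[OF cong_cmult_leftI[OF assms(2)] assms(1)] .
  then have "[c * (8 * x) = c * (8 * y)] (mod v)" for c
    by (rule cong_scalar_left)
  from this[of 1] this[of 2] show ?thesis
    unfolding heffter_entry_def by (auto intro: cong_add cong_diff)
qed

lemma heffter_entry_card_sum:
  fixes K e d n v g :: nat
  assumes "K dvd 8" "odd e" "g < v" "v = K * e" "n = d * e"
  shows "(\<Sum>k<3. card {i. i < n \<and> heffter_entry k (int i) mod int v = int g}
                 + card {i. i < n \<and> (- heffter_entry k (int i)) mod int v = int g})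
           = (if [int g = 1] (mod int K) then d else 0) + (if [int g = - 1] (mod int K) then d else 0)
           + (if [int g = - 6] (mod int K) then d else 0) + (if [int g = 6] (mod int K) then d else 0)
           + (if [int g = 5] (mod int K) then d else 0) + (if [int g = - 5] (mod int K) then d else 0)"
proof -
  define c where "c = int (8 div K)"
  have K: "0 < K" "int K * c = 8"
    using assms(1) dvd_pos_nat[of 8 K] by (auto simp: c_def simp flip: of_nat_mult)
  have "coprime (2 :: int) (int e)"
    using assms(2) by (simp add: coprime_left_2_iff_odd)
  then have "coprime (16 :: int) (int e)"
    using coprime_power_left_iff[of 2 4 "int e"] by simp
  then have coprime: "coprime m (int e)" if "m dvd 16" for m
    using that coprime_divisors[of m 16 "int e" "int e"] by simp
  have "c dvd 8"
    unfolding K(2)[symmetric] by simp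
  then have "c dvd 16" "- 2 * c dvd 16"
    using mult_dvd_mono[of 2 2 c 8] by (simp_all add: dvd_trans[of c 8 16])
  then have cop: "coprime c (int e)" "coprime (- 2 * c) (int e)"
    by (simp_all only: coprime)
  have E: "heffter_entry 0 x = 1 + int K * c * x"
          "heffter_entry 1 x = - 6 + int K * (- 2 * c) * x"
          "heffter_entry 2 x = 5 + int K * c * x" for x
    using K(2) by (simp_all add: heffter_entry_def algebra_simps)
  show ?thesis
    using card_signed_progression_mod[OF cop(1) K(1) assms(3-5) E(1)]
          card_signed_progression_mod[OF cop(2) K(1) assms(3-5) E(2)]
          card_signed_progression_mod[OF cop(1) K(1) assms(3-5) E(3)]
    by (simp add: sum_lessThan_3)
qed

lemma heffter_entry_multiplicity:
  fixes n lam t v g :: nat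
  assumes "odd n" "lam * t = 2 * n" "v = 4 * t" "g < v"
  shows "(\<Sum>k<3. card {i. i < n \<and> heffter_entry k (int i) mod int v = int g}
                 + card {i. i < n \<and> (- heffter_entry k (int i)) mod int v = int g})
           = (if 4 dvd g then 0 else lam)"
proof (cases "odd lam")
  case True
  then have "lam dvd n"
    using assms(2) by (metis coprime_commute coprime_dvd_mult_right_iff coprime_left_2_iff_odd dvd_triv_left)
  then obtain e where e: "n = lam * e" by blast
  with assms(1-3) have "odd e" "v = 8 * e"
    by auto
  moreover have "int g mod 8 \<in> {0..7}" "4 dvd g \<longleftrightarrow> int g mod 8 \<in> {0, 4}"
    by auto presburger+
  ultimately show ?thesis
    using heffter_entry_card_sum[of 8 e g v n lam] assms(4) e by (auto simp: cong_def)
next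
  case False
  then obtain d where d: "lam = 2 * d" by blast
  with assms(1-3) have "odd t" "v = 4 * t" "n = d * t"
    by auto
  moreover have "int g mod 4 \<in> {0..3}" "4 dvd g \<longleftrightarrow> int g mod 4 = 0"
    by auto presburger+
  ultimately show ?thesis
    using heffter_entry_card_sum[of 4 t g v n d] assms(4) d by (auto simp: cong_def)
qed

definition heffter_residue :: "nat \<Rightarrow> nat \<Rightarrow> nat \<Rightarrow> nat" where
  "heffter_residue v k i = nat (heffter_entry k (int i) mod int v)"

lemma heffter_residue_less: "0 < v \<Longrightarrow> heffter_residue v k i < v"
  by (simp add: heffter_residue_def nat_less_iff)

lemma heffter_residue_row_sum:
  assumes "0 < v"
  shows "(\<Sum>k<3. heffter_residue v k i) mod v = 0"
  unfolding heffter_residue_def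
  using assms by (intro sum_nat_mod_eq_0) (simp_all add: heffter_entry_row_sum)

lemma heffter_residue_col_sum:
  assumes "0 < v" "v dvd 8 * n" "3 \<le> n"
  shows "(\<Sum>k<3. heffter_residue v k ((j + n - k) mod n)) mod v = 0"
  unfolding heffter_residue_def
proof (rule sum_nat_mod_eq_0[OF assms(1)])
  have "int v dvd 8 * int n"
    using assms(2) by (metis of_nat_dvd_iff of_nat_mult of_nat_numeral)
  then have "[(\<Sum>k<3. heffter_entry k (int ((j + n - k) mod n)))
               = (\<Sum>k<3. heffter_entry k (int j - int k))] (mod int v)"
    using assms(3) by (intro cong_sum heffter_entry_cong[of "int v" "int n"] cong_cyclic_col_index) auto
  then show "[(\<Sum>k<3. heffter_entry k (int ((j + n - k) mod n))) = 0] (mod int v)"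
    by (simp only: heffter_entry_col_sum)
qed

lemma count_heffter_residues:
  fixes n lam t v g :: nat
  assumes "odd n" "lam * t = 2 * n" "v = 4 * t" "g < v"
  shows "count (\<Sum>i<n. \<Sum>k<3. {#heffter_residue v k i, (v - heffter_residue v k i) mod v#}) g
           = (if 4 dvd g then 0 else lam)"
proof -
  have "0 < v" using assms(4) by simp
  then have "count (\<Sum>i<n. \<Sum>k<3. {#heffter_residue v k i, (v - heffter_residue v k i) mod v#}) g
      = (\<Sum>k<3. card {i. i < n \<and> heffter_entry k (int i) mod int v = int g}
               + card {i. i < n \<and> (- heffter_entry k (int i)) mod int v = int g})"
    by (simp add: count_sum_pairs heffter_residue_def nat_mod_minus nat_eq_iff)
  also have "\<dots> = (if 4 dvd g then 0 else lam)"
    using assms by (rule heffter_entry_multiplicity)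
  finally show ?thesis .
qed

lemma mem_subgroup_J_iff:
  assumes "0 < t" "g < 4 * t"
  shows "g \<in> subgroup_J (4 * t) t \<longleftrightarrow> 4 dvd g"
  using assms by (simp add: subgroup_J_def)

theorem proposition4:
  fixes n lam :: nat
  assumes "odd n" and "n \<ge> 3" and "lam > 0" and "lam dvd 2 * n"
  shows "\<exists>A. relative_heffter lam (2 * n div lam) n n 3 3 A"
proof -
  define t where "t = 2 * n div lam"
  have t: "lam * t = 2 * n" "0 < t"
    using assms by (auto simp: t_def intro!: div_greater_zero_iff[THEN iffD2] dvd_imp_le)
  have "2 * n * 3 div lam = 3 * t" "4 * t dvd 8 * n"
    using assms(3) by (simp_all flip: t(1) add: mult.assoc)
  have "relative_heffter lam t n n 3 3 (cyclic_array n 3 (heffter_residue (4 * t)))"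
  proof (rule relative_heffter_cyclic_arrayI)
    show "heffter_residue (4 * t) k i < 4 * t" for k i
      using t(2) by (simp add: heffter_residue_less)
    show "(\<Sum>k<3. heffter_residue (4 * t) k i) mod (4 * t) = 0" for i
      using t(2) by (simp add: heffter_residue_row_sum)
    show "(\<Sum>k<3. heffter_residue (4 * t) k ((j + n - k) mod n)) mod (4 * t) = 0" for j
      using t(2) \<open>4 * t dvd 8 * n\<close> assms(2) by (simp add: heffter_residue_col_sum)
    show "count (\<Sum>i<n. \<Sum>k<3. {#heffter_residue (4 * t) k i,
                                   (4 * t - heffter_residue (4 * t) k i) mod (4 * t)#}) g
            = (if g \<in> subgroup_J (4 * t) t then 0 else lam)" if "g < 4 * t" for g
      using that t by (simp add: count_heffter_residues[OF assms(1) t(1)] mem_subgroup_J_iff)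
    show "lam dvd 2 * n * 3"
      using assms(4) by (rule dvd_mult2)
  qed (use assms t \<open>2 * n * 3 div lam = 3 * t\<close> in simp_all)
  then show ?thesis
    unfolding t_def by blast
qed

end
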